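(* Let $n\ge1$, $\sigma\in S_n$, and let $\Lambda$ be a growth associated with $\sigma$ with $P(\Lambda)=P$ and $Q(\Lambda)=Q$. Then \[ \frac{(1-t)^n}{(1-q)^n}\,\mathcal{P}(\Lambda)=\overline{\mathcal{P}}(\Lambda)\,\psi_P(q,t)\,\varphi_Q(q,t). \]
   Context: All quantities are rational functions of indeterminates $q,t$. Partitions are Young diagrams in French convention (cells $(x,y)\in\mathbb{Z}_{>0}^2$ with $x\le\lambda_y$), $\lambda'$ the conjugate; for $c=(x,y)\in\lambda$, $a_\lambda(c)=\lambda_y-x$, $\ell_\lambda(c)=\lambda'_x-y$; $n(\kappa)=\sum_{c\in\kappa}\ell_\kappa(c)$, $n'(\kappa)=\sum_{c\in\kappa}a_\kappa(c)$, $n(\rho/\kappa)=n(\rho)-n(\kappa)$, $n'(\rho/\kappa)=n'(\rho)-n'(\kappa)$. $\mathcal{U}(\lambda)$, $\mathcal{D}(\lambda)$: partitions obtained by adding, resp. removing, one cell; $\mathcal{D}^*(\lambda)=\mathcal{D}(\lambda)\cup\{\lambda\}$. For $\kappa\subseteq\rho$, $\mathcal{R}_{\rho/\kappa}$ (resp. $\mathcal{C}_{\rho/\kappa}$): cells of $\kappa$ in a row (resp. column) containing a cell of $\rho/\kappa$. $[i,j]=1-q^it^j$, $b_{i,j}=[i,j+1]/[i+1,j]$, $b_\lambda(c)=b_{a_\lambda(c),\ell_\lambda(c)}$. For $\kappa\lessdot\rho$ (one-cell difference): $\psi_{\rho/\kappa}=\prod_{c\in\mathcal{R}_{\rho/\kappa}}\frac{b_\kappa(c)}{b_\rho(c)}$,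 $\varphi_{\rho/\kappa}=\frac{1-t}{1-q}\prod_{c\in\mathcal{C}_{\rho/\kappa}}\frac{b_\rho(c)}{b_\kappa(c)}$. For a standard Young tableau $T$ with $n$ cells and $T^{(i)}$ the shape of entries $\le i$: $\psi_T=\prod_{i=1}^n\psi_{T^{(i)}/T^{(i-1)}}$, $\varphi_T=\prod_{i=1}^n\varphi_{T^{(i)}/T^{(i-1)}}$. For $\kappa\lessdot\rho$: $\alpha_{\rho/\kappa}=\prod_{c\in\mathcal{R}_{\rho/\kappa}}\frac{[a_\kappa(c),\ell_\kappa(c)+1]}{[a_\rho(c),\ell_\rho(c)+1]}\prod_{c\in\mathcal{C}_{\rho/\kappa}}\frac{[a_\kappa(c)+1,\ell_\kappa(c)]}{[a_\rho(c)+1,\ell_\rho(c)]}$, $\overline{\alpha}_{\rho/\kappa}=\prod_{c\in\mathcal{R}_{\rho/\kappa}}\frac{[a_\kappa(c)+1,\ell_\kappa(c)]}{[a_\rho(c)+1,\ell_\rho(c)]}\prod_{c\in\mathcal{C}_{\rho/\kappa}}\frac{[a_\kappa(c),\ell_\kappa(c)+1]}{[a_\rho(c),\ell_\rho(c)+1]}$, $\beta=1/\alpha$, $\overline{\beta}=1/\overline{\alpha}$. Local probabilities: $\mathcal{P}_\lambda(\lambda\rightarrow\nu)=t^{n(\nu/\lambda)}\alpha_{\nu/\lambda}$, $\overline{\mathcal{P}}_\lambda(\lambda\leftarrow\nu)=t^{n(\nu/\lambda)}\overline{\alpha}_{\nu/\lambda}$; for $\mu\in\mathcal{D}(\lambda)$,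 $\nu\in\mathcal{U}(\lambda)$, with $A=n'(\lambda/\mu)-n'(\nu/\lambda)$, $B=n(\nu/\lambda)-n(\lambda/\mu)$, $\gamma=\frac{(1-q^At^B)(1-q^{A+1}t^{B-1})}{(1-q)(1-t)}$: $\mathcal{P}_\lambda(\mu\rightarrow\nu)=t^{B-1}\alpha_{\nu/\lambda}\beta_{\lambda/\mu}/\gamma$, $\overline{\mathcal{P}}_\lambda(\mu\leftarrow\nu)=t^{B-1}\overline{\alpha}_{\nu/\lambda}\overline{\beta}_{\lambda/\mu}/\gamma$. Growths: for $\sigma\in S_n$, take the $n\times n$ grid with vertices $(i,j)$, $0\le i,j\le n$ (matrix coordinates); square $(i,j)$ has vertices NW $(i-1,j-1)$, NE $(i-1,j)$, SW $(i,j-1)$, SE $(i,j)$ and contains a 1 iff $i=\sigma(j)$. A growth associated with $\sigma$ is a labeling $\Lambda_{ij}$ by partitions with $\Lambda_{ij}\subseteq\Lambda_{i,j+1}$, $\Lambda_{ij}\subseteq\Lambda_{i+1,j}$, and $|\Lambda_{ij}|$ = number of squares $(i',j')$ with $i'\le i$, $j'\le j$ containing a 1. $P(\Lambda)$ (resp. $Q(\Lambda)$) has entry $i$ in the cell $\Lambda_{i,n}/\Lambda_{i-1,n}$ (resp. $\Lambda_{n,i}/\Lambda_{n,i-1}$). A square is of type III if its NE and SW vertices are both $\lambda$, NW vertex $\mu\in\mathcal{D}^*(\lambda)$, SE vertex $\nu\in\mathcal{U}(\lambda)$; then $\mathcal{P}(\square)=\mathcal{P}_\lambda(\mu\rightarrow\nu)$,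 $\overline{\mathcal{P}}(\square)=\overline{\mathcal{P}}_\lambda(\mu\leftarrow\nu)$; otherwise both equal 1. $\mathcal{P}(\Lambda)=\prod_\square\mathcal{P}(\square)$, $\overline{\mathcal{P}}(\Lambda)=\prod_\square\overline{\mathcal{P}}(\square)$. *)

theory Defs
  imports Complex_Main "HOL-Combinatorics.Permutations"
    "HOL-Computational_Algebra.Polynomial" "HOL-Computational_Algebra.Fraction_Field"
begin

text \<open>The field Q(q,t) is realised as the fraction field of Z[t][q]
  (type int poly poly fract): the outer polynomial variable is t, the inner one is q.\<close>

type_synonym ratfun = "int poly poly fract"

definition q_ind :: ratfun where "q_ind = Fract [:[:0, 1:]:] 1"
definition t_ind :: ratfun where "t_ind = Fract [:0, 1:] 1"

section \<open>Partitions as Young diagrams (French convention), cells (x,y) with x,y >= 1\<close>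

type_synonym cell = "nat \<times> nat"
type_synonym diagram = "cell set"

definition is_partition :: "diagram \<Rightarrow> bool" where
  "is_partition S \<longleftrightarrow> finite S \<and>
     (\<forall>x y. (x, y) \<in> S \<longrightarrow> 1 \<le> x \<and> 1 \<le> y \<and>
        (\<forall>x' y'. 1 \<le> x' \<and> x' \<le> x \<and> 1 \<le> y' \<and> y' \<le> y \<longrightarrow> (x', y') \<in> S))"

definition row_len :: "diagram \<Rightarrow> nat \<Rightarrow> nat" where
  "row_len S y = card {x. (x, y) \<in> S}"
definition col_len :: "diagram \<Rightarrow> nat \<Rightarrow> nat" where
  "col_len S x = card {y. (x, y) \<in> S}"

definition arm :: "diagram \<Rightarrow> cell \<Rightarrow> nat" where
  "arm S c = row_len S (snd c) - fst c"
definition leg :: "diagram \<Rightarrow> cell \<Rightarrow> nat" where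
  "leg S c = col_len S (fst c) - snd c"

definition n_stat :: "diagram \<Rightarrow> int" where
  "n_stat S = (\<Sum>c\<in>S. int (leg S c))"
definition n'_stat :: "diagram \<Rightarrow> int" where
  "n'_stat S = (\<Sum>c\<in>S. int (arm S c))"

definition n_skew :: "diagram \<Rightarrow> diagram \<Rightarrow> int" where
  "n_skew \<rho> \<kappa> = n_stat \<rho> - n_stat \<kappa>"
definition n'_skew :: "diagram \<Rightarrow> diagram \<Rightarrow> int" where
  "n'_skew \<rho> \<kappa> = n'_stat \<rho> - n'_stat \<kappa>"

definition covers :: "diagram \<Rightarrow> diagram \<Rightarrow> bool" where
  "covers \<kappa> \<rho> \<longleftrightarrow> is_partition \<kappa> \<and> is_partition \<rho> \<and> \<kappa> \<subseteq> \<rho> \<and> card (\<rho> - \<kappa>) = 1"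

definition Ups :: "diagram \<Rightarrow> diagram set" where
  "Ups lam = {\<nu>. covers lam \<nu>}"
definition Dns :: "diagram \<Rightarrow> diagram set" where
  "Dns lam = {\<mu>. covers \<mu> lam}"
definition Dns_star :: "diagram \<Rightarrow> diagram set" where
  "Dns_star lam = Dns lam \<union> {lam}"

definition Rset :: "diagram \<Rightarrow> diagram \<Rightarrow> diagram" where
  "Rset \<rho> \<kappa> = {c \<in> \<kappa>. \<exists>x'. (x', snd c) \<in> \<rho> - \<kappa>}"
definition Cset :: "diagram \<Rightarrow> diagram \<Rightarrow> diagram" where
  "Cset \<rho> \<kappa> = {c \<in> \<kappa>. \<exists>y'. (fst c, y') \<in> \<rho> - \<kappa>}"

definition brk :: "'a::field \<Rightarrow> 'a \<Rightarrow> nat \<Rightarrow> nat \<Rightarrow> 'a" where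
  "brk q t i j = 1 - q ^ i * t ^ j"

definition bij_wt :: "'a::field \<Rightarrow> 'a \<Rightarrow> nat \<Rightarrow> nat \<Rightarrow> 'a" where
  "bij_wt q t i j = brk q t i (j + 1) / brk q t (i + 1) j"

definition b_cell :: "'a::field \<Rightarrow> 'a \<Rightarrow> diagram \<Rightarrow> cell \<Rightarrow> 'a" where
  "b_cell q t S c = bij_wt q t (arm S c) (leg S c)"

definition psi_skew :: "'a::field \<Rightarrow> 'a \<Rightarrow> diagram \<Rightarrow> diagram \<Rightarrow> 'a" where
  "psi_skew q t \<rho> \<kappa> = (\<Prod>c\<in>Rset \<rho> \<kappa>. b_cell q t \<kappa> c / b_cell q t \<rho> c)"

definition phi_skew :: "'a::field \<Rightarrow> 'a \<Rightarrow> diagram \<Rightarrow> diagram \<Rightarrow> 'a" where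
  "phi_skew q t \<rho> \<kappa> = (1 - t) / (1 - q) * (\<Prod>c\<in>Cset \<rho> \<kappa>. b_cell q t \<rho> c / b_cell q t \<kappa> c)"

text \<open>A tableau is given by its shape sh and a filling T : cell => nat;
  T^(i) is the set of cells of sh with entry at most i.\<close>
definition tab_sub :: "diagram \<Rightarrow> (cell \<Rightarrow> nat) \<Rightarrow> nat \<Rightarrow> diagram" where
  "tab_sub sh T i = {c \<in> sh. T c \<le> i}"

definition psi_tab :: "'a::field \<Rightarrow> 'a \<Rightarrow> diagram \<Rightarrow> (cell \<Rightarrow> nat) \<Rightarrow> 'a" where
  "psi_tab q t sh T = (\<Prod>i\<in>{1..card sh}. psi_skew q t (tab_sub sh T i) (tab_sub sh T (i - 1)))"

definition phi_tab :: "'a::field \<Rightarrow> 'a \<Rightarrow> diagram \<Rightarrow> (cell \<Rightarrow> nat) \<Rightarrow> 'a" where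
  "phi_tab q t sh T = (\<Prod>i\<in>{1..card sh}. phi_skew q t (tab_sub sh T i) (tab_sub sh T (i - 1)))"

definition alpha :: "'a::field \<Rightarrow> 'a \<Rightarrow> diagram \<Rightarrow> diagram \<Rightarrow> 'a" where
  "alpha q t \<rho> \<kappa> =
     (\<Prod>c\<in>Rset \<rho> \<kappa>. brk q t (arm \<kappa> c) (leg \<kappa> c + 1) / brk q t (arm \<rho> c) (leg \<rho> c + 1)) *
     (\<Prod>c\<in>Cset \<rho> \<kappa>. brk q t (arm \<kappa> c + 1) (leg \<kappa> c) / brk q t (arm \<rho> c + 1) (leg \<rho> c))"

definition alpha_bar :: "'a::field \<Rightarrow> 'a \<Rightarrow> diagram \<Rightarrow> diagram \<Rightarrow> 'a" where
  "alpha_bar q t \<rho> \<kappa> =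
     (\<Prod>c\<in>Rset \<rho> \<kappa>. brk q t (arm \<kappa> c + 1) (leg \<kappa> c) / brk q t (arm \<rho> c + 1) (leg \<rho> c)) *
     (\<Prod>c\<in>Cset \<rho> \<kappa>. brk q t (arm \<kappa> c) (leg \<kappa> c + 1) / brk q t (arm \<rho> c) (leg \<rho> c + 1))"

definition beta :: "'a::field \<Rightarrow> 'a \<Rightarrow> diagram \<Rightarrow> diagram \<Rightarrow> 'a" where
  "beta q t \<rho> \<kappa> = 1 / alpha q t \<rho> \<kappa>"
definition beta_bar :: "'a::field \<Rightarrow> 'a \<Rightarrow> diagram \<Rightarrow> diagram \<Rightarrow> 'a" where
  "beta_bar q t \<rho> \<kappa> = 1 / alpha_bar q t \<rho> \<kappa>"

definition gamma :: "'a::field \<Rightarrow> 'a \<Rightarrow> diagram \<Rightarrow> diagram \<Rightarrow> diagram \<Rightarrow> 'a" where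
  "gamma q t lam \<mu> \<nu> =
     (let A = n'_skew lam \<mu> - n'_skew \<nu> lam; B = n_skew \<nu> lam - n_skew lam \<mu>
      in (1 - q powi A * t powi B) * (1 - q powi (A + 1) * t powi (B - 1)) / ((1 - q) * (1 - t)))"

text \<open>P_lambda(mu -> nu), for mu in D*(lambda) and nu in U(lambda)\<close>
definition locP :: "'a::field \<Rightarrow> 'a \<Rightarrow> diagram \<Rightarrow> diagram \<Rightarrow> diagram \<Rightarrow> 'a" where
  "locP q t lam \<mu> \<nu> =
     (if \<mu> = lam then t powi (n_skew \<nu> lam) * alpha q t \<nu> lam
      else t powi (n_skew \<nu> lam - n_skew lam \<mu> - 1) * alpha q t \<nu> lam * beta q t lam \<mu>
             / gamma q t lam \<mu> \<nu>)"

definition locPbar :: "'a::field \<Rightarrow> 'a \<Rightarrow> diagram \<Rightarrow> diagram \<Rightarrow> diagram \<Rightarrow> 'a" where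
  "locPbar q t lam \<mu> \<nu> =
     (if \<mu> = lam then t powi (n_skew \<nu> lam) * alpha_bar q t \<nu> lam
      else t powi (n_skew \<nu> lam - n_skew lam \<mu> - 1) * alpha_bar q t \<nu> lam * beta_bar q t lam \<mu>
             / gamma q t lam \<mu> \<nu>)"

text \<open>Lambda i j is the label of vertex (i,j), 0 <= i,j <= n (matrix coordinates).
  Square (i,j), 1 <= i,j <= n, contains a 1 iff i = sigma j.\<close>
definition is_growth :: "nat \<Rightarrow> (nat \<Rightarrow> nat) \<Rightarrow> (nat \<Rightarrow> nat \<Rightarrow> diagram) \<Rightarrow> bool" where
  "is_growth n \<sigma> \<Lambda> \<longleftrightarrow>
     (\<forall>i\<le>n. \<forall>j\<le>n. is_partition (\<Lambda> i j)) \<and>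
     (\<forall>i\<le>n. \<forall>j<n. \<Lambda> i j \<subseteq> \<Lambda> i (j + 1)) \<and>
     (\<forall>i<n. \<forall>j\<le>n. \<Lambda> i j \<subseteq> \<Lambda> (i + 1) j) \<and>
     (\<forall>i\<le>n. \<forall>j\<le>n. card (\<Lambda> i j) =
        card {(i', j'). 1 \<le> i' \<and> i' \<le> i \<and> 1 \<le> j' \<and> j' \<le> j \<and> i' = \<sigma> j'})"

definition P_tab :: "nat \<Rightarrow> (nat \<Rightarrow> nat \<Rightarrow> diagram) \<Rightarrow> cell \<Rightarrow> nat" where
  "P_tab n \<Lambda> c = (THE i. 1 \<le> i \<and> i \<le> n \<and> c \<in> \<Lambda> i n - \<Lambda> (i - 1) n)"
definition Q_tab :: "nat \<Rightarrow> (nat \<Rightarrow> nat \<Rightarrow> diagram) \<Rightarrow> cell \<Rightarrow> nat" where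
  "Q_tab n \<Lambda> c = (THE i. 1 \<le> i \<and> i \<le> n \<and> c \<in> \<Lambda> n i - \<Lambda> n (i - 1))"

text \<open>Square (i,j): NW = (i-1,j-1), NE = (i-1,j), SW = (i,j-1), SE = (i,j).\<close>
definition type_III :: "(nat \<Rightarrow> nat \<Rightarrow> diagram) \<Rightarrow> nat \<Rightarrow> nat \<Rightarrow> bool" where
  "type_III \<Lambda> i j \<longleftrightarrow> \<Lambda> (i - 1) j = \<Lambda> i (j - 1) \<and>
     \<Lambda> (i - 1) (j - 1) \<in> Dns_star (\<Lambda> (i - 1) j) \<and> \<Lambda> i j \<in> Ups (\<Lambda> (i - 1) j)"

definition sqP :: "'a::field \<Rightarrow> 'a \<Rightarrow> (nat \<Rightarrow> nat \<Rightarrow> diagram) \<Rightarrow> nat \<Rightarrow> nat \<Rightarrow> 'a" where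
  "sqP q t \<Lambda> i j = (if type_III \<Lambda> i j
      then locP q t (\<Lambda> (i - 1) j) (\<Lambda> (i - 1) (j - 1)) (\<Lambda> i j) else 1)"
definition sqPbar :: "'a::field \<Rightarrow> 'a \<Rightarrow> (nat \<Rightarrow> nat \<Rightarrow> diagram) \<Rightarrow> nat \<Rightarrow> nat \<Rightarrow> 'a" where
  "sqPbar q t \<Lambda> i j = (if type_III \<Lambda> i j
      then locPbar q t (\<Lambda> (i - 1) j) (\<Lambda> (i - 1) (j - 1)) (\<Lambda> i j) else 1)"

definition growthP :: "'a::field \<Rightarrow> 'a \<Rightarrow> nat \<Rightarrow> (nat \<Rightarrow> nat \<Rightarrow> diagram) \<Rightarrow> 'a" where
  "growthP q t n \<Lambda> = (\<Prod>i\<in>{1..n}. \<Prod>j\<in>{1..n}. sqP q t \<Lambda> i j)"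
definition growthPbar :: "'a::field \<Rightarrow> 'a \<Rightarrow> nat \<Rightarrow> (nat \<Rightarrow> nat \<Rightarrow> diagram) \<Rightarrow> 'a" where
  "growthPbar q t n \<Lambda> = (\<Prod>i\<in>{1..n}. \<Prod>j\<in>{1..n}. sqPbar q t \<Lambda> i j)"

end

(*
  Weight every edge of the growth: the vertical edge from (i-1,j) to (i,j) by psi of the
  added cell, the horizontal edge from (i,j-1) to (i,j) by phi of the added cell without its
  constant factor (1-t)/(1-q).  Each square then satisfies a local identity: P of the square
  times the weights of its west and north edges equals Pbar of the square times the weights
  of its east and south edges.  For a square of type III this is alpha = alpha_bar psi phi,
  which holds cell by cell since b_{a,l} = [a,l+1]/[a+1,l].  For any other square either one
  pair of opposite edges is trivial, or two cells in different rows and columns are added in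
  either order, and the two products of psi and phi agree.  Multiplying over all squares the
  interior edges cancel, the west and north borders carry empty diagrams, and the east and
  south borders are the chains read off by P and Q, giving psi_P and phi_Q.  Cancelling
  requires the brackets [i,j], (i,j) <> (0,0), to be nonzero, which holds for indeterminates.
*)

theory Submission
  imports Defs
begin

definition generic_qt :: "'a::field \<Rightarrow> 'a \<Rightarrow> bool" where
  "generic_qt q t \<longleftrightarrow> (\<forall>i j. 0 < i + j \<longrightarrow> q ^ i * t ^ j \<noteq> 1)"

lemma Fract_power: "Fract (p::'a::idom) 1 ^ k = Fract (p ^ k) 1"
  by (induction k) (simp_all add: One_fract_def)

lemma generic_qt_ind: "generic_qt q_ind t_ind"
  unfolding generic_qt_def
proof (intro allI impI)
  fix i j :: nat
  assume "0 < i + j"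
  then have "monom (monom (1::int) i) j \<noteq> 1"
    by (simp add: monom_eq_1_iff)
  moreover have "q_ind ^ i * t_ind ^ j = Fract ([:[:0, 1:]:] ^ i * [:0, 1:] ^ j) 1"
    by (simp add: q_ind_def t_ind_def Fract_power)
  moreover have "[:[:0, 1:]:] ^ i * [:0, 1:] ^ j = monom (monom (1::int) i) j"
  proof -
    have q_pow: "[:[:0, 1:]:] ^ i = monom ([:0, 1:] ^ i) 0"
      by (simp add: monom_power flip: monom_0)
    have X_pow: "([:0, 1:] :: int poly) ^ i = monom 1 i" "([:0, 1:] :: int poly poly) ^ j = monom 1 j"
      by (simp_all add: monom_altdef)
    show ?thesis
      unfolding q_pow X_pow by (simp add: mult_monom)
  qed
  ultimately show "q_ind ^ i * t_ind ^ j \<noteq> 1"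
    by (simp add: One_fract_def eq_fract)
qed

lemma brk_nonzero: "generic_qt q t \<Longrightarrow> 0 < i + j \<Longrightarrow> brk q t i j \<noteq> 0"
  unfolding generic_qt_def brk_def by auto

lemma bij_wt_nonzero: "generic_qt q t \<Longrightarrow> bij_wt q t i j \<noteq> 0"
  unfolding bij_wt_def by (simp add: brk_nonzero)

lemma b_cell_nonzero: "generic_qt q t \<Longrightarrow> b_cell q t S c \<noteq> 0"
  unfolding b_cell_def by (rule bij_wt_nonzero)

definition phi_cells :: "'a::field \<Rightarrow> 'a \<Rightarrow> diagram \<Rightarrow> diagram \<Rightarrow> 'a" where
  "phi_cells q t \<rho> \<kappa> = (\<Prod>c\<in>Cset \<rho> \<kappa>. b_cell q t \<rho> c / b_cell q t \<kappa> c)"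

lemma phi_skew_eq_phi_cells: "phi_skew q t \<rho> \<kappa> = (1 - t) / (1 - q) * phi_cells q t \<rho> \<kappa>"
  unfolding phi_skew_def phi_cells_def ..

lemma psi_skew_nonzero: "generic_qt q t \<Longrightarrow> psi_skew q t \<rho> \<kappa> \<noteq> 0"
  unfolding psi_skew_def by (cases "finite (Rset \<rho> \<kappa>)") (auto simp: b_cell_nonzero)

lemma phi_cells_nonzero: "generic_qt q t \<Longrightarrow> phi_cells q t \<rho> \<kappa> \<noteq> 0"
  unfolding phi_cells_def by (cases "finite (Cset \<rho> \<kappa>)") (auto simp: b_cell_nonzero)

lemma psi_skew_refl [simp]: "psi_skew q t \<rho> \<rho> = 1"
  unfolding psi_skew_def Rset_def by simp

lemma phi_cells_refl [simp]: "phi_cells q t \<rho> \<rho> = 1"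
  unfolding phi_cells_def Cset_def by simp

lemma alpha_eq_alpha_bar_psi_phi:
  assumes "generic_qt q t"
  shows "alpha q t \<rho> \<kappa> = alpha_bar q t \<rho> \<kappa> * psi_skew q t \<rho> \<kappa> * phi_cells q t \<rho> \<kappa>"
proof -
  have row_factor: "brk q t a (l + 1) / brk q t a' (l' + 1) =
      brk q t (a + 1) l / brk q t (a' + 1) l' * (bij_wt q t a l / bij_wt q t a' l')"
    and col_factor: "brk q t (a + 1) l / brk q t (a' + 1) l' =
      brk q t a (l + 1) / brk q t a' (l' + 1) * (bij_wt q t a' l' / bij_wt q t a l)" for a l a' l'
    using assms by (simp_all add: bij_wt_def brk_nonzero divide_simps)
  have "alpha q t \<rho> \<kappa> =
      (\<Prod>c\<in>Rset \<rho> \<kappa>. brk q t (arm \<kappa> c + 1) (leg \<kappa> c) / brk q t (arm \<rho> c + 1) (leg \<rho> c) *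
         (b_cell q t \<kappa> c / b_cell q t \<rho> c)) *
      (\<Prod>c\<in>Cset \<rho> \<kappa>. brk q t (arm \<kappa> c) (leg \<kappa> c + 1) / brk q t (arm \<rho> c) (leg \<rho> c + 1) *
         (b_cell q t \<rho> c / b_cell q t \<kappa> c))"
    unfolding alpha_def b_cell_def by (intro arg_cong2[where f = "(*)"] prod.cong refl row_factor col_factor)
  also have "\<dots> = alpha_bar q t \<rho> \<kappa> * psi_skew q t \<rho> \<kappa> * phi_cells q t \<rho> \<kappa>"
    unfolding alpha_bar_def psi_skew_def phi_cells_def prod.distrib by (simp only: ac_simps)
  finally show ?thesis .
qed

lemma locP_psi_phi_eq_locPbar:
  assumes "generic_qt q t"
  shows "locP q t lam \<mu> \<nu> * (psi_skew q t lam \<mu> * phi_cells q t lam \<mu>) =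
         locPbar q t lam \<mu> \<nu> * (psi_skew q t \<nu> lam * phi_cells q t \<nu> lam)"
proof -
  have "psi_skew q t lam \<mu> * phi_cells q t lam \<mu> \<noteq> 0"
    using assms by (simp add: psi_skew_nonzero phi_cells_nonzero)
  then show ?thesis
    unfolding locP_def locPbar_def beta_def beta_bar_def alpha_eq_alpha_bar_psi_phi[OF assms]
    by (simp add: field_simps)
qed

lemma is_partition_finite: "is_partition S \<Longrightarrow> finite S"
  unfolding is_partition_def by blast

lemma is_partition_downward:
  "is_partition S \<Longrightarrow> (x, y) \<in> S \<Longrightarrow> 1 \<le> x' \<Longrightarrow> x' \<le> x \<Longrightarrow> 1 \<le> y' \<Longrightarrow> y' \<le> y \<Longrightarrow> (x', y') \<in> S"
  unfolding is_partition_def by blast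

lemma is_partition_pos: "is_partition S \<Longrightarrow> (x, y) \<in> S \<Longrightarrow> 1 \<le> x \<and> 1 \<le> y"
  unfolding is_partition_def by blast

lemma row_len_insert:
  assumes "finite S" "p \<notin> S"
  shows "row_len (insert p S) r = row_len S r + of_bool (snd p = r)"
proof -
  have "{x. (x, r) \<in> insert p S} = (if snd p = r then insert (fst p) else id) {x. (x, r) \<in> S}"
    by (cases p) auto
  moreover have "finite {x. (x, r) \<in> S}"
    using finite_imageI[OF assms(1), of fst] by (rule finite_subset[rotated]) force
  ultimately show ?thesis
    using assms(2) unfolding row_len_def by (cases p) auto
qed

lemma col_len_insert:
  assumes "finite S" "p \<notin> S"
  shows "col_len (insert p S) r = col_len S r + of_bool (fst p = r)"
proof -
  have "{y. (r, y) \<in> insert p S} = (if fst p = r then insert (snd p) else id) {y. (r, y) \<in> S}"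
    by (cases p) auto
  moreover have "finite {y. (r, y) \<in> S}"
    using finite_imageI[OF assms(1), of snd] by (rule finite_subset[rotated]) force
  ultimately show ?thesis
    using assms(2) unfolding col_len_def by (cases p) auto
qed

lemma fst_le_row_len:
  assumes "is_partition S" "(x, y) \<in> S"
  shows "x \<le> row_len S y"
proof -
  have "{1..x} \<subseteq> {x'. (x', y) \<in> S}"
    using assms is_partition_downward[OF assms] is_partition_pos[OF assms] by auto
  moreover have "finite {x'. (x', y) \<in> S}"
    using finite_imageI[OF is_partition_finite[OF assms(1)], of fst] by (rule finite_subset[rotated]) force
  ultimately show ?thesis
    unfolding row_len_def using card_mono[of _ "{1..x}"] by fastforce
qed

lemma snd_le_col_len:
  assumes "is_partition S" "(x, y) \<in> S"
  shows "y \<le> col_len S x"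
proof -
  have "{1..y} \<subseteq> {y'. (x, y') \<in> S}"
    using assms is_partition_downward[OF assms] is_partition_pos[OF assms] by auto
  moreover have "finite {y'. (x, y') \<in> S}"
    using finite_imageI[OF is_partition_finite[OF assms(1)], of snd] by (rule finite_subset[rotated]) force
  ultimately show ?thesis
    unfolding col_len_def using card_mono[of _ "{1..y}"] by fastforce
qed

lemma arm_insert:
  assumes "is_partition S" "p \<notin> S" "c \<in> S"
  shows "arm (insert p S) c = arm S c + of_bool (snd p = snd c)"
  using assms fst_le_row_len[OF assms(1), of "fst c" "snd c"]
  by (simp add: arm_def row_len_insert is_partition_finite)

lemma leg_insert:
  assumes "is_partition S" "p \<notin> S" "c \<in> S"
  shows "leg (insert p S) c = leg S c + of_bool (fst p = fst c)"
  using assms snd_le_col_len[OF assms(1), of "fst c" "snd c"]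
  by (simp add: leg_def col_len_insert is_partition_finite)

lemma addable_cells_distinct_lines:
  assumes "is_partition (insert u a)" "is_partition (insert v a)" "u \<notin> a" "v \<notin> a" "u \<noteq> v"
  shows "fst u \<noteq> fst v" "snd u \<noteq> snd v"
proof -
  have row_prefix: "(x', y) \<in> a" if "is_partition (insert (x, y) a)" "1 \<le> x'" "x' < x" for x y x'
    using that is_partition_pos[OF that(1), of x y] is_partition_downward[OF that(1), of x y x' y]
    by auto
  have col_prefix: "(x, y') \<in> a" if "is_partition (insert (x, y) a)" "1 \<le> y'" "y' < y" for x y y'
    using that is_partition_pos[OF that(1), of x y] is_partition_downward[OF that(1), of x y x y']
    by auto
  obtain x y x' y' where u: "u = (x, y)" and v: "v = (x', y')"
    by fastforce
  have pos: "1 \<le> x" "1 \<le> y" "1 \<le> x'" "1 \<le> y'"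
    using is_partition_pos assms(1,2) u v by auto
  show "fst u \<noteq> fst v"
  proof
    assume "fst u = fst v"
    with assms(5) have "x' = x" "y < y' \<or> y' < y"
      unfolding u v by auto
    then show False
      using col_prefix[of x y' y] col_prefix[of x y y'] assms pos unfolding u v by auto
  qed
  show "snd u \<noteq> snd v"
  proof
    assume "snd u = snd v"
    with assms(5) have "y' = y" "x < x' \<or> x' < x"
      unfolding u v by auto
    then show False
      using row_prefix[of x' y x] row_prefix[of x y x'] assms pos unfolding u v by auto
  qed
qed

lemma prod_mult_prod_cong_off_point:
  fixes f g f' g' :: "'b \<Rightarrow> 'a::comm_monoid_mult"
  assumes "finite A" "finite B" "z \<in> A \<longleftrightarrow> z \<in> B"
    and "\<And>c. c \<in> A \<Longrightarrow> c \<noteq> z \<Longrightarrow> f c = g c"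
    and "\<And>c. c \<in> B \<Longrightarrow> c \<noteq> z \<Longrightarrow> f' c = g' c"
    and "z \<in> A \<Longrightarrow> f z * f' z = g z * g' z"
  shows "prod f A * prod f' B = prod g A * prod g' B"
proof (cases "z \<in> A")
  case True
  then have "prod f A * prod f' B = f z * f' z * (prod f (A - {z}) * prod f' (B - {z}))"
    using assms(1-3) by (simp add: prod.remove ac_simps)
  also have "\<dots> = g z * g' z * (prod g (A - {z}) * prod g' (B - {z}))"
    using True assms(4-6) by (metis (no_types, lifting) DiffE insertCI prod.cong)
  also have "\<dots> = prod g A * prod g' B"
    using True assms(1-3) by (simp add: prod.remove ac_simps)
  finally show ?thesis .
next
  case False
  then show ?thesis
    using assms(3-5) by (metis prod.cong)
qed

lemma psi_phi_diamond:
  assumes "generic_qt q t" "is_partition a"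
    and "is_partition (insert x a)" "is_partition (insert y a)" "x \<notin> a" "y \<notin> a" "x \<noteq> y"
  shows "psi_skew q t (insert x (insert y a)) (insert x a) * phi_cells q t (insert x (insert y a)) (insert y a)
       = psi_skew q t (insert y a) a * phi_cells q t (insert x a) a"
proof -
  let ?b = "insert x a" and ?c = "insert y a" and ?d = "insert x (insert y a)"
  let ?row = "{c \<in> a. snd c = snd y}" and ?col = "{c \<in> a. fst c = fst x}"
  \<comment> \<open>Only the cell in the column of x and the row of y sees both new cells;
    for every other cell the factors of the two sides agree one by one.\<close>
  define z where "z = (fst x, snd y)"
  have lines: "fst x \<noteq> fst y" "snd x \<noteq> snd y"
    using addable_cells_distinct_lines assms(3-7) by blast+
  have R: "Rset ?d ?b = ?row" "Rset ?c a = ?row" and C: "Cset ?d ?c = ?col" "Cset ?b a = ?col"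
    using assms(5-7) lines unfolding Rset_def Cset_def by (cases x; cases y; auto)+
  have x_ins: "x \<notin> ?c"
    using assms(5,7) by simp
  have b_cells:
    "b_cell q t ?b c = bij_wt q t (arm a c + of_bool (snd x = snd c)) (leg a c + of_bool (fst x = fst c))"
    "b_cell q t ?c c = bij_wt q t (arm a c + of_bool (snd y = snd c)) (leg a c + of_bool (fst y = fst c))"
    "b_cell q t ?d c = bij_wt q t (arm a c + of_bool (snd y = snd c) + of_bool (snd x = snd c))
                                  (leg a c + of_bool (fst y = fst c) + of_bool (fst x = fst c))"
    if "c \<in> a" for c
    using that assms(2,4-6) x_ins
    by (simp_all add: b_cell_def arm_insert leg_insert)
  have old_cells: "c \<noteq> x" "c \<noteq> y" if "c \<in> a" for c
    using that assms(5,6) by auto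
  have row_cells: "fst c = fst x \<longleftrightarrow> c = z" "fst c \<noteq> fst y" "snd c \<noteq> snd x" if "c \<in> ?row" for c
    using that lines old_cells[of c] unfolding z_def by (cases c; auto)+
  have col_cells: "snd c = snd y \<longleftrightarrow> c = z" "snd c \<noteq> snd x" "fst c \<noteq> fst y" if "c \<in> ?col" for c
    using that lines old_cells[of c] unfolding z_def by (cases c; auto)+
  have "finite ?row" "finite ?col"
    using is_partition_finite[OF assms(2)] by simp_all
  moreover have "z \<in> ?row \<longleftrightarrow> z \<in> ?col"
    unfolding z_def by auto
  ultimately have
    "(\<Prod>c\<in>?row. b_cell q t ?b c / b_cell q t ?d c) * (\<Prod>c\<in>?col. b_cell q t ?d c / b_cell q t ?c c) =
     (\<Prod>c\<in>?row. b_cell q t a c / b_cell q t ?c c) * (\<Prod>c\<in>?col. b_cell q t ?b c / b_cell q t a c)"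
  proof (rule prod_mult_prod_cong_off_point)
    show "b_cell q t ?b c / b_cell q t ?d c = b_cell q t a c / b_cell q t ?c c" if "c \<in> ?row" "c \<noteq> z" for c
      using that row_cells[OF that(1)] b_cells[of c] by (simp add: b_cell_def)
    show "b_cell q t ?d c / b_cell q t ?c c = b_cell q t ?b c / b_cell q t a c" if "c \<in> ?col" "c \<noteq> z" for c
      using that col_cells[OF that(1)] b_cells[of c] by (simp add: b_cell_def)
    show "b_cell q t ?b z / b_cell q t ?d z * (b_cell q t ?d z / b_cell q t ?c z) =
          b_cell q t a z / b_cell q t ?c z * (b_cell q t ?b z / b_cell q t a z)" if "z \<in> ?row"
      using that row_cells[OF that] b_cells[of z] bij_wt_nonzero[OF assms(1)]
      by (simp add: b_cell_def field_simps)
  qed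
  then show ?thesis
    unfolding psi_skew_def phi_cells_def R C .
qed

lemma covers_of_card:
  "is_partition \<kappa> \<Longrightarrow> is_partition \<rho> \<Longrightarrow> \<kappa> \<subseteq> \<rho> \<Longrightarrow> card \<rho> = card \<kappa> + 1 \<Longrightarrow> covers \<kappa> \<rho>"
  unfolding covers_def using card_Diff_subset[of \<kappa> \<rho>] is_partition_finite[of \<kappa>] by auto

lemma square_cases:
  assumes parts: "is_partition a" "is_partition b" "is_partition c" "is_partition d"
    and incl: "a \<subseteq> b" "a \<subseteq> c" "b \<subseteq> d" "c \<subseteq> d"
    and steps: "card b \<le> card a + 1" "card c \<le> card a + 1"
    and local_rule: "card b = card a \<and> card c = card a \<and> card d = card a + 1 \<or>
      card d + card a = card b + card c"
    and not_III: "\<not> (b = c \<and> a \<in> Dns_star b \<and> d \<in> Ups b)"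
  obtains (horizontal_trivial) "b = a" "d = c"
    | (vertical_trivial) "c = a" "d = b"
    | (diamond) x y where "x \<noteq> y" "x \<notin> a" "y \<notin> a" "b = insert x a" "c = insert y a" "d = insert x (insert y a)"
proof -
  have fin: "finite a" "finite b" "finite c" "finite d"
    using parts is_partition_finite by auto
  have mono: "card a \<le> card b" "card a \<le> card c" "card b \<le> card d" "card c \<le> card d"
    using incl fin by (simp_all add: card_mono)
  have eq_of_card: "\<kappa> = \<rho>" if "\<kappa> \<subseteq> \<rho>" "finite \<rho>" "card \<rho> = card \<kappa>" for \<kappa> \<rho> :: diagram
    using that card_subset_eq by metis
  have additive: "card d + card a = card b + card c"
  proof (rule ccontr)
    assume "card d + card a \<noteq> card b + card c"
    with local_rule have "b = a" "c = a" "covers b d"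
      using eq_of_card incl fin parts covers_of_card by auto
    with not_III show False
      unfolding Dns_star_def Ups_def by simp
  qed
  consider "card b = card a" | "card c = card a" | "card b = card a + 1" "card c = card a + 1"
    using steps mono by linarith
  then show thesis
  proof cases
    case 1
    then show thesis
      using that(1) additive eq_of_card[of a b] eq_of_card[of c d] incl fin by simp
  next
    case 2
    then show thesis
      using that(2) additive eq_of_card[of a c] eq_of_card[of b d] incl fin by simp
  next
    case 3
    have "card (b - a) = 1" "card (c - a) = 1"
      using 3 card_Diff_subset[OF fin(1)] incl(1,2) by simp_all
    then obtain x y where "b - a = {x}" "c - a = {y}"
      by (meson card_1_singletonE)
    then have x: "b = insert x a" "x \<notin> a" and y: "c = insert y a" "y \<notin> a"
      using incl(1,2) by auto
    have "x \<noteq> y"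
    proof
      assume "x = y"
      then have "b = c" "covers a b" "covers b d"
        using x y 3 additive parts incl covers_of_card by auto
      with not_III show False
        unfolding Dns_star_def Dns_def Ups_def by simp
    qed
    moreover have "d = insert x (insert y a)"
      using eq_of_card[of "insert x (insert y a)" d] incl x y fin 3 additive \<open>x \<noteq> y\<close> by simp
    ultimately show thesis
      using that(3) x y by blast
  qed
qed

definition dot_cols :: "(nat \<Rightarrow> nat) \<Rightarrow> nat \<Rightarrow> nat \<Rightarrow> nat set" where
  "dot_cols \<sigma> i j = {j' \<in> {1..j}. \<sigma> j' \<in> {1..i}}"

lemma card_dot_cols:
  "card {(i', j'). 1 \<le> i' \<and> i' \<le> i \<and> 1 \<le> j' \<and> j' \<le> j \<and> i' = \<sigma> j'} = card (dot_cols \<sigma> i j)"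
proof -
  have "{(i', j'). 1 \<le> i' \<and> i' \<le> i \<and> 1 \<le> j' \<and> j' \<le> j \<and> i' = \<sigma> j'} = (\<lambda>j'. (\<sigma> j', j')) ` dot_cols \<sigma> i j"
    unfolding dot_cols_def by auto
  moreover have "inj_on (\<lambda>j'. (\<sigma> j', j')) (dot_cols \<sigma> i j)"
    by (rule inj_onI) auto
  ultimately show ?thesis
    by (simp add: card_image)
qed

lemma dot_cols_empty [simp]: "dot_cols \<sigma> 0 j = {}" "dot_cols \<sigma> i 0 = {}"
  unfolding dot_cols_def by auto

lemma dot_cols_full:
  assumes "\<sigma> permutes {1..n}"
  shows "dot_cols \<sigma> n n = {1..n}"
proof -
  have "\<forall>j'\<in>{1..n}. \<sigma> j' \<in> {1..n}"
    using permutes_in_image[OF assms] by simp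
  then show ?thesis
    unfolding dot_cols_def by blast
qed

lemma card_dot_cols_col_step:
  "card (dot_cols \<sigma> i (Suc j)) = card (dot_cols \<sigma> i j) + of_bool (\<sigma> (Suc j) \<in> {1..i})"
proof -
  have "dot_cols \<sigma> i (Suc j) = (if \<sigma> (Suc j) \<in> {1..i} then insert (Suc j) else id) (dot_cols \<sigma> i j)"
    unfolding dot_cols_def by (auto simp: atLeastAtMostSuc_conv)
  moreover have "Suc j \<notin> dot_cols \<sigma> i j" "finite (dot_cols \<sigma> i j)"
    unfolding dot_cols_def by auto
  ultimately show ?thesis
    by simp
qed

lemma card_dot_cols_row_step:
  assumes "inj \<sigma>"
  shows "card (dot_cols \<sigma> i j) \<le> card (dot_cols \<sigma> (i - 1) j) + 1"
proof -
  have "j' \<in> insert (inv \<sigma> i) (dot_cols \<sigma> (i - 1) j)" if "j' \<in> dot_cols \<sigma> i j" for j'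
  proof (cases "\<sigma> j' = i")
    case True
    then show ?thesis
      using inv_f_f[OF assms, of j'] by simp
  next
    case False
    then show ?thesis
      using that unfolding dot_cols_def by auto
  qed
  then have "dot_cols \<sigma> i j \<subseteq> insert (inv \<sigma> i) (dot_cols \<sigma> (i - 1) j)"
    by blast
  then have "card (dot_cols \<sigma> i j) \<le> card (insert (inv \<sigma> i) (dot_cols \<sigma> (i - 1) j))"
    by (rule card_mono[rotated]) (simp add: dot_cols_def)
  also have "\<dots> \<le> card (dot_cols \<sigma> (i - 1) j) + 1"
    by (simp add: card_insert_le_m1 dot_cols_def)
  finally show ?thesis .
qed

lemma dot_cols_before_dot:
  assumes "inj \<sigma>" "\<sigma> j = i"
  shows "dot_cols \<sigma> i (j - 1) = dot_cols \<sigma> (i - 1) (j - 1)"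
proof -
  have "\<sigma> j' \<in> {1..i} \<longleftrightarrow> \<sigma> j' \<in> {1..i - 1}" if "j' \<in> {1..j - 1}" for j'
  proof -
    have "\<sigma> j' \<noteq> \<sigma> j"
      using that injD[OF assms(1), of j' j] by auto
    then show ?thesis
      using assms(2) by auto
  qed
  then show ?thesis
    unfolding dot_cols_def by (intro Collect_cong) auto
qed

lemma prod_shift_telescope:
  fixes n :: nat
  shows "(\<Prod>j\<in>{1..n}. f (j - 1)) * f n = f 0 * (\<Prod>j\<in>{1..n}. f j :: 'a::comm_monoid_mult)"
  by (induction n) (simp_all add: ac_simps)

lemma prod_grid_telescope:
  fixes s s' V H :: "nat \<Rightarrow> nat \<Rightarrow> 'a::field"
  assumes local: "\<And>i j. i \<in> {1..n} \<Longrightarrow> j \<in> {1..n} \<Longrightarrow>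
      s i j * (V i (j - 1) * H (i - 1) j) = s' i j * (V i j * H i j)"
    and V_0: "\<And>i. i \<in> {1..n} \<Longrightarrow> V i 0 = 1" and H_0: "\<And>j. j \<in> {1..n} \<Longrightarrow> H 0 j = 1"
    and V_nonzero: "\<And>i j. V i j \<noteq> 0" and H_nonzero: "\<And>i j. H i j \<noteq> 0"
  shows "(\<Prod>i\<in>{1..n}. \<Prod>j\<in>{1..n}. s i j) =
    (\<Prod>i\<in>{1..n}. \<Prod>j\<in>{1..n}. s' i j) * (\<Prod>i\<in>{1..n}. V i n) * (\<Prod>j\<in>{1..n}. H n j)"
proof -
  let ?grid = "\<lambda>f :: nat \<Rightarrow> nat \<Rightarrow> 'a. \<Prod>i\<in>{1..n}. \<Prod>j\<in>{1..n}. f i j"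
  let ?west = "?grid (\<lambda>i j. V i (j - 1))" and ?north = "?grid (\<lambda>i j. H (i - 1) j)"
  have V_rows: "(\<Prod>j\<in>{1..n}. V i (j - 1)) * V i n = (\<Prod>j\<in>{1..n}. V i j)" if "i \<in> {1..n}" for i
    using prod_shift_telescope[of "V i" n] V_0[OF that] by simp
  have H_cols: "(\<Prod>i\<in>{1..n}. H (i - 1) j) * H n j = (\<Prod>i\<in>{1..n}. H i j)" if "j \<in> {1..n}" for j
    using prod_shift_telescope[of "\<lambda>i. H i j" n] H_0[OF that] by simp
  have "?grid s * (?west * ?north) = ?grid (\<lambda>i j. s i j * (V i (j - 1) * H (i - 1) j))"
    by (simp only: prod.distrib)
  also have "\<dots> = ?grid (\<lambda>i j. s' i j * (V i j * H i j))"
    using local by (intro prod.cong refl) simp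
  also have "\<dots> = ?grid s' * (?grid V * ?grid H)"
    by (simp only: prod.distrib)
  also have "?grid V = ?west * (\<Prod>i\<in>{1..n}. V i n)"
    unfolding prod.distrib[symmetric] using V_rows by (intro prod.cong refl) simp
  also have "?grid H = (\<Prod>j\<in>{1..n}. \<Prod>i\<in>{1..n}. H i j)"
    by (rule prod.swap)
  also have "\<dots> = (\<Prod>j\<in>{1..n}. \<Prod>i\<in>{1..n}. H (i - 1) j) * (\<Prod>j\<in>{1..n}. H n j)"
    unfolding prod.distrib[symmetric] using H_cols by (intro prod.cong refl) simp
  also have "(\<Prod>j\<in>{1..n}. \<Prod>i\<in>{1..n}. H (i - 1) j) = ?north"
    by (rule prod.swap[symmetric])
  finally have "?grid s * (?west * ?north) =
      ?grid s' * (\<Prod>i\<in>{1..n}. V i n) * (\<Prod>j\<in>{1..n}. H n j) * (?west * ?north)"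
    by (simp only: ac_simps)
  moreover have "?west * ?north \<noteq> 0"
    using V_nonzero H_nonzero by simp
  ultimately show ?thesis
    by (metis mult_right_cancel)
qed

lemma chain_mono_le:
  fixes C :: "nat \<Rightarrow> 'a set"
  assumes "\<And>i. i < n \<Longrightarrow> C i \<subseteq> C (Suc i)" "i \<le> i'" "i' \<le> n"
  shows "C i \<subseteq> C i'"
proof -
  have "C (min k n) \<subseteq> C (min (Suc k) n)" for k
    using assms(1)[of k] by (cases "k < n") (simp_all add: min_def)
  then show ?thesis
    using lift_Suc_mono_le[of "\<lambda>i. C (min i n)" i i'] assms(2,3) by simp
qed

lemma chain_first_entry:
  fixes C :: "nat \<Rightarrow> 'a set"
  assumes C_0: "C 0 = {}" and mono: "\<And>i. i < n \<Longrightarrow> C i \<subseteq> C (Suc i)" and "c \<in> C n"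
  shows "(THE i. 1 \<le> i \<and> i \<le> n \<and> c \<in> C i - C (i - 1)) = (LEAST i. c \<in> C i)"
proof -
  let ?m = "LEAST i. c \<in> C i"
  have m: "c \<in> C ?m" "?m \<le> n"
    using assms(3) by (auto intro: LeastI Least_le)
  show ?thesis
  proof (rule the_equality)
    have "?m \<noteq> 0"
      using m C_0 by (metis empty_iff)
    moreover have "c \<notin> C (?m - 1)"
      using not_less_Least[of "?m - 1" "\<lambda>i. c \<in> C i"] \<open>?m \<noteq> 0\<close> by simp
    ultimately show "1 \<le> ?m \<and> ?m \<le> n \<and> c \<in> C ?m - C (?m - 1)"
      using m by simp
  next
    fix i
    assume i: "1 \<le> i \<and> i \<le> n \<and> c \<in> C i - C (i - 1)"
    then have "?m \<le> i"
      by (auto intro: Least_le)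
    moreover have "\<not> ?m \<le> i - 1"
    proof
      assume "?m \<le> i - 1"
      then have "C ?m \<subseteq> C (i - 1)"
        using i chain_mono_le[where C = C and n = n, OF mono, of ?m "i - 1"] by linarith
      then show False
        using i m by auto
    qed
    ultimately show "i = ?m"
      by simp
  qed
qed

lemma tab_sub_chain:
  fixes C :: "nat \<Rightarrow> diagram"
  assumes C_0: "C 0 = {}" and mono: "\<And>i. i < n \<Longrightarrow> C i \<subseteq> C (Suc i)" and "k \<le> n"
  shows "tab_sub (C n) (\<lambda>c. THE i. 1 \<le> i \<and> i \<le> n \<and> c \<in> C i - C (i - 1)) k = C k"
proof -
  have "(LEAST i. c \<in> C i) \<le> k \<longleftrightarrow> c \<in> C k" if "c \<in> C n" for c
  proof
    assume "(LEAST i. c \<in> C i) \<le> k"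
    then show "c \<in> C k"
      using chain_mono_le[where C = C and n = n, OF mono, of "LEAST i. c \<in> C i" k]
        LeastI[of "\<lambda>i. c \<in> C i" n] that assms(3) by blast
  next
    assume "c \<in> C k"
    then show "(LEAST i. c \<in> C i) \<le> k"
      by (rule Least_le)
  qed
  moreover have "C k \<subseteq> C n"
    using chain_mono_le[where C = C and n = n, OF mono, of k n] assms(3) by simp
  ultimately show ?thesis
    unfolding tab_sub_def using chain_first_entry[where C = C and n = n, OF C_0 mono] by auto
qed

definition vert_wt :: "'a::field \<Rightarrow> 'a \<Rightarrow> (nat \<Rightarrow> nat \<Rightarrow> diagram) \<Rightarrow> nat \<Rightarrow> nat \<Rightarrow> 'a" where
  "vert_wt q t \<Lambda> i j = psi_skew q t (\<Lambda> i j) (\<Lambda> (i - 1) j)"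

definition horiz_wt :: "'a::field \<Rightarrow> 'a \<Rightarrow> (nat \<Rightarrow> nat \<Rightarrow> diagram) \<Rightarrow> nat \<Rightarrow> nat \<Rightarrow> 'a" where
  "horiz_wt q t \<Lambda> i j = phi_cells q t (\<Lambda> i j) (\<Lambda> i (j - 1))"

locale growth =
  fixes n :: nat and \<sigma> :: "nat \<Rightarrow> nat" and \<Lambda> :: "nat \<Rightarrow> nat \<Rightarrow> diagram"
  assumes permutation: "\<sigma> permutes {1..n}" and growth: "is_growth n \<sigma> \<Lambda>"
begin

lemma partition: "i \<le> n \<Longrightarrow> j \<le> n \<Longrightarrow> is_partition (\<Lambda> i j)"
  using growth unfolding is_growth_def by simp

lemma mono_col: "i \<le> n \<Longrightarrow> j < n \<Longrightarrow> \<Lambda> i j \<subseteq> \<Lambda> i (Suc j)"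
  using growth unfolding is_growth_def by simp

lemma mono_row: "i < n \<Longrightarrow> j \<le> n \<Longrightarrow> \<Lambda> i j \<subseteq> \<Lambda> (Suc i) j"
  using growth unfolding is_growth_def by simp

lemma card_eq: "i \<le> n \<Longrightarrow> j \<le> n \<Longrightarrow> card (\<Lambda> i j) = card (dot_cols \<sigma> i j)"
  using growth unfolding is_growth_def card_dot_cols by simp

lemma empty_border: "i \<le> n \<Longrightarrow> \<Lambda> i 0 = {}" "j \<le> n \<Longrightarrow> \<Lambda> 0 j = {}"
  using card_eq[of i 0] is_partition_finite[OF partition[of i 0]]
    card_eq[of 0 j] is_partition_finite[OF partition[of 0 j]] by simp_all

lemma card_shape: "card (\<Lambda> n n) = n"
  using card_eq[of n n] dot_cols_full[OF permutation] by simp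

lemma square_cards:
  assumes "i \<in> {1..n}" "j \<in> {1..n}"
  defines "a \<equiv> card (\<Lambda> (i - 1) (j - 1))" and "b \<equiv> card (\<Lambda> (i - 1) j)"
    and "c \<equiv> card (\<Lambda> i (j - 1))" and "d \<equiv> card (\<Lambda> i j)"
  shows "b \<le> a + 1" "c \<le> a + 1" "b = a \<and> c = a \<and> d = a + 1 \<or> d + a = b + c"
proof -
  obtain i' j' where i: "i = Suc i'" "i' < n" and j: "j = Suc j'" "j' < n"
    using assms(1,2) by (metis atLeastAtMost_iff Suc_le_eq not0_implies_Suc not_one_le_zero)
  have inj: "inj \<sigma>"
    using permutation by (rule permutes_inj)
  have b: "b = a + of_bool (\<sigma> j \<in> {1..i'})" and d: "d = c + of_bool (\<sigma> j \<in> {1..i})"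
    unfolding a_def b_def c_def d_def i j using i j by (simp_all add: card_eq card_dot_cols_col_step)
  have "c \<le> a + 1"
    unfolding a_def c_def i j using i j card_dot_cols_row_step[OF inj, of "Suc i'" j'] by (simp add: card_eq)
  moreover have "c = a" if "\<sigma> j = i"
    unfolding a_def c_def i j using i j dot_cols_before_dot[OF inj that] by (simp add: card_eq)
  ultimately show "b \<le> a + 1" "c \<le> a + 1" "b = a \<and> c = a \<and> d = a + 1 \<or> d + a = b + c"
    using b d i by auto
qed

lemma square_weights:
  assumes "generic_qt q t" "i \<in> {1..n}" "j \<in> {1..n}"
  shows "sqP q t \<Lambda> i j * (vert_wt q t \<Lambda> i (j - 1) * horiz_wt q t \<Lambda> (i - 1) j) =
         sqPbar q t \<Lambda> i j * (vert_wt q t \<Lambda> i j * horiz_wt q t \<Lambda> i j)"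
proof (cases "type_III \<Lambda> i j")
  case True
  have "sqP q t \<Lambda> i j = locP q t (\<Lambda> (i - 1) j) (\<Lambda> (i - 1) (j - 1)) (\<Lambda> i j)"
    and "sqPbar q t \<Lambda> i j = locPbar q t (\<Lambda> (i - 1) j) (\<Lambda> (i - 1) (j - 1)) (\<Lambda> i j)"
    unfolding sqP_def sqPbar_def if_P[OF True] by (rule refl)+
  moreover have "\<Lambda> i (j - 1) = \<Lambda> (i - 1) j"
    using True unfolding type_III_def by simp
  ultimately show ?thesis
    unfolding vert_wt_def horiz_wt_def by (simp only: locP_psi_phi_eq_locPbar[OF assms(1)])
next
  case False
  obtain i' j' where i: "i = Suc i'" "i' < n" and j: "j = Suc j'" "j' < n"
    using assms(2,3) by (metis atLeastAtMost_iff Suc_le_eq not0_implies_Suc not_one_le_zero)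
  have parts: "is_partition (\<Lambda> i' j')" "is_partition (\<Lambda> i' j)"
      "is_partition (\<Lambda> i j')" "is_partition (\<Lambda> i j)"
    using i j by (simp_all add: partition)
  have incl: "\<Lambda> i' j' \<subseteq> \<Lambda> i' j" "\<Lambda> i' j' \<subseteq> \<Lambda> i j'"
      "\<Lambda> i' j \<subseteq> \<Lambda> i j" "\<Lambda> i j' \<subseteq> \<Lambda> i j"
    using i j by (simp_all add: mono_row mono_col)
  have trivial: "sqP q t \<Lambda> i j = 1" "sqPbar q t \<Lambda> i j = 1"
    using False by (simp_all add: sqP_def sqPbar_def)
  from False have "\<not> (\<Lambda> i' j = \<Lambda> i j' \<and> \<Lambda> i' j' \<in> Dns_star (\<Lambda> i' j) \<and> \<Lambda> i j \<in> Ups (\<Lambda> i' j))"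
    unfolding type_III_def i j by simp
  from square_cases[OF parts incl
      square_cards[OF assms(2,3), unfolded i(1) j(1) diff_Suc_1, folded i(1) j(1)] this,
      case_names horizontal_trivial vertical_trivial diamond]
  show ?thesis
  proof cases
    case horizontal_trivial
    then show ?thesis
      using trivial unfolding vert_wt_def horiz_wt_def i j by simp
  next
    case vertical_trivial
    then show ?thesis
      using trivial unfolding vert_wt_def horiz_wt_def i j by simp
  next
    case (diamond x y)
    then show ?thesis
      using psi_phi_diamond[OF assms(1) parts(1), of x y] parts trivial
      unfolding vert_wt_def horiz_wt_def i j by simp
  qed
qed

lemma growthP_eq_boundary:
  assumes "generic_qt q t"
  shows "growthP q t n \<Lambda> =
    growthPbar q t n \<Lambda> * (\<Prod>i\<in>{1..n}. vert_wt q t \<Lambda> i n) * (\<Prod>j\<in>{1..n}. horiz_wt q t \<Lambda> n j)"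
  unfolding growthP_def growthPbar_def
proof (rule prod_grid_telescope)
  show "vert_wt q t \<Lambda> i 0 = 1" if "i \<in> {1..n}" for i
    using that empty_border(1)[of i] empty_border(1)[of "i - 1"] by (simp add: vert_wt_def le_diff_conv)
  show "horiz_wt q t \<Lambda> 0 j = 1" if "j \<in> {1..n}" for j
    using that empty_border(2)[of j] empty_border(2)[of "j - 1"] by (simp add: horiz_wt_def le_diff_conv)
qed (use assms square_weights in \<open>simp_all add: vert_wt_def horiz_wt_def psi_skew_nonzero phi_cells_nonzero\<close>)

lemma psi_tab_P: "psi_tab q t (\<Lambda> n n) (P_tab n \<Lambda>) = (\<Prod>i\<in>{1..n}. vert_wt q t \<Lambda> i n)"
proof -
  have "tab_sub (\<Lambda> n n) (P_tab n \<Lambda>) k = \<Lambda> k n" if "k \<le> n" for k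
    using tab_sub_chain[of "\<lambda>i. \<Lambda> i n" n k] empty_border(2)[of n] mono_row that
    unfolding P_tab_def[abs_def] by simp
  then show ?thesis
    unfolding psi_tab_def card_shape vert_wt_def by (intro prod.cong refl) (simp add: le_diff_conv)
qed

lemma phi_tab_Q:
  "phi_tab q t (\<Lambda> n n) (Q_tab n \<Lambda>) = ((1 - t) / (1 - q)) ^ n * (\<Prod>j\<in>{1..n}. horiz_wt q t \<Lambda> n j)"
proof -
  have "tab_sub (\<Lambda> n n) (Q_tab n \<Lambda>) k = \<Lambda> n k" if "k \<le> n" for k
    using tab_sub_chain[of "\<lambda>j. \<Lambda> n j" n k] empty_border(1)[of n] mono_col that
    unfolding Q_tab_def[abs_def] by simp
  then have "phi_tab q t (\<Lambda> n n) (Q_tab n \<Lambda>) = (\<Prod>j\<in>{1..n}. (1 - t) / (1 - q) * horiz_wt q t \<Lambda> n j)"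
    unfolding phi_tab_def card_shape horiz_wt_def phi_skew_eq_phi_cells
    by (intro prod.cong refl) (simp add: le_diff_conv)
  then show ?thesis
    by (simp only: prod.distrib prod_constant card_atLeastAtMost diff_Suc_1)
qed

end

theorem lemma4p25:
  fixes n :: nat and \<sigma> :: "nat \<Rightarrow> nat" and \<Lambda> :: "nat \<Rightarrow> nat \<Rightarrow> diagram"
  assumes "n \<ge> 1"
    and "\<sigma> permutes {1..n}"
    and "is_growth n \<sigma> \<Lambda>"
  shows "(1 - t_ind) ^ n / (1 - q_ind) ^ n * growthP q_ind t_ind n \<Lambda> =
         growthPbar q_ind t_ind n \<Lambda> * psi_tab q_ind t_ind (\<Lambda> n n) (P_tab n \<Lambda>)
           * phi_tab q_ind t_ind (\<Lambda> n n) (Q_tab n \<Lambda>)"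
proof -
  interpret growth n \<sigma> \<Lambda>
    using assms(2,3) by unfold_locales
  show ?thesis
    unfolding growthP_eq_boundary[OF generic_qt_ind] psi_tab_P phi_tab_Q
    by (simp add: power_divide ac_simps)
qed

end
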